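(* Let $d,j$ be integers with $0<j<d$. Let $\lambda_1,\dots,\lambda_t$ be the elements of $\mathscr{P}_{3,d-1}(j)$ and $\mu_1,\dots,\mu_s$ the elements of $\mathscr{P}_{3,d-1}(j-1)$, and define the $s\times t$ matrix $C=(C_{pq})$ by $E([x^{\lambda_q}])=\sum_{p=1}^{s} C_{pq}[x^{\mu_p}]$. Then $\operatorname{rank} C = s = p_{3,d-1}(j-1)$.
   Context: $\Bbbk$ is an algebraically closed field of characteristic $0$. For an integer $d\ge 1$, $A(d)=\Bbbk[x_1,x_2,x_3]/(x_1^d,x_2^d,x_3^d)=\bigoplus_j A(d)_j$ with its standard grading; the monomials $x_1^{a_1}x_2^{a_2}x_3^{a_3}$ with $0\le a_i\le d-1$ form a basis. The linear map $E:A(d)_{j+1}\to A(d)_j$ is defined on monomials by $E(x_1^{a_1}x_2^{a_2}x_3^{a_3})=\sum_{k=1}^{3} a_k(d-a_k)\,x_1^{a_1}\cdots x_k^{a_k-1}\cdots x_3^{a_3}$ (terms with $a_k=0$ vanish). For integers $l\ge 0$ and $n$, $\mathscr{P}_{3,l}(n)$ is the set of integer triples $(a,b,c)$ with $l\ge a\ge b\ge c\ge 0$, $a+b+c=n$, and $p_{3,l}(n)=|\mathscr{P}_{3,l}(n)|$ (so $p_{3,l}(n)=0$ for $n<0$). For $\lambda=(a,b,c)$, $[x^\lambda]$ denotes the sum of the distinct monomials in the orbit of $x_1^ax_2^bx_3^c$ under the action of $S_3$ permuting the variables. *)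

theory Defs
  imports "HOL-Computational_Algebra.Polynomial" "Jordan_Normal_Form.DL_Rank"
begin

text \<open>Elements of A(d) = k[x1,x2,x3]/(x1^d,x2^d,x3^d) are represented by their
coefficient functions on exponent triples (a1,a2,a3); the basis monomials are
those with all a_i < d.\<close>

definition basis_exps :: "nat \<Rightarrow> (nat \<times> nat \<times> nat) set" where
  "basis_exps d = {(a1,a2,a3). a1 < d \<and> a2 < d \<and> a3 < d}"

definition E_mon :: "nat \<Rightarrow> nat \<times> nat \<times> nat \<Rightarrow> nat \<times> nat \<times> nat \<Rightarrow> 'a::field" where
  "E_mon d e = (case e of (a1,a2,a3) \<Rightarrow> (\<lambda>m.
      (if 0 < a1 \<and> m = (a1 - 1, a2, a3) then of_nat (a1 * (d - a1)) else 0)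
    + (if 0 < a2 \<and> m = (a1, a2 - 1, a3) then of_nat (a2 * (d - a2)) else 0)
    + (if 0 < a3 \<and> m = (a1, a2, a3 - 1) then of_nat (a3 * (d - a3)) else 0)))"

definition E_map :: "nat \<Rightarrow> (nat \<times> nat \<times> nat \<Rightarrow> 'a::field) \<Rightarrow> nat \<times> nat \<times> nat \<Rightarrow> 'a" where
  "E_map d f = (\<lambda>m. \<Sum>e\<in>basis_exps d. f e * E_mon d e m)"

definition P3 :: "nat \<Rightarrow> nat \<Rightarrow> (nat \<times> nat \<times> nat) set" where
  "P3 l n = {(a,b,c). l \<ge> a \<and> a \<ge> b \<and> b \<ge> c \<and> a + b + c = n}"

definition p3 :: "nat \<Rightarrow> nat \<Rightarrow> nat" where
  "p3 l n = card (P3 l n)"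

definition orbit3 :: "nat \<times> nat \<times> nat \<Rightarrow> (nat \<times> nat \<times> nat) set" where
  "orbit3 e = (case e of (a,b,c) \<Rightarrow>
     {(a,b,c), (a,c,b), (b,a,c), (b,c,a), (c,a,b), (c,b,a)})"

definition orbit_sum :: "nat \<times> nat \<times> nat \<Rightarrow> nat \<times> nat \<times> nat \<Rightarrow> 'a::field" where
  "orbit_sum e = (\<lambda>m. if m \<in> orbit3 e then 1 else 0)"

end

theory Submission imports Defs begin

text \<open>For each \<mu> = (a,b,c) in P_{3,d-1}(j-1) the raised partition (a+1,b,c) lies in
P_{3,d-1}(j), and the column of C indexed by it has a positive entry (at least (a+1)(d-a-1)) in row \<mu>,
while it vanishes in every other row \<mu>' whose largest part is at most a: E lowers one
exponent of an orbit element of (a+1,b,c) by one, and the only sorted triple so obtained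
with largest part \<le> a is (a,b,c). Ordering rows by their largest part, these columns
form a triangular square submatrix with nonzero diagonal.\<close>

lemma rank_le_dim_row:
  fixes C :: "'a::field mat"
  assumes "C \<in> carrier_mat n nc"
  shows "vec_space.rank n C \<le> n"
proof -
  interpret vec_space "TYPE('a)" n .
  have "set (cols C) \<subseteq> carrier_vec n" using assms cols_dim by blast
  then have "subspace class_ring (span (set (cols C))) V" using span_is_subspace by simp
  moreover have "vectorspace.fin_dim class_ring (vs (span (set (cols C))))"
    using fin_dim_span_cols[OF assms] .
  ultimately have "vectorspace.dim class_ring (vs (span (set (cols C)))) \<le> dim"
    using subspace_dim by auto
  then show ?thesis unfolding rank_def dim_is_n .
qed

lemma rank_ge_dim_row_if_columns_indpt:
  fixes C :: "'a::field mat"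
  assumes C: "C \<in> carrier_mat n nc"
    and f: "\<And>k. k < n \<Longrightarrow> f k < nc"
    and indpt: "\<And>v. (\<And>k. k < n \<Longrightarrow> (\<Sum>i<n. C $$ (i, f k) * v i) = 0) \<Longrightarrow> \<forall>i<n. v i = 0"
  shows "n \<le> vec_space.rank n C"
proof -
  interpret vec_space "TYPE('a)" n .
  define B where "B = mat n n (\<lambda>(i,k). C $$ (i, f k))"
  have B: "B \<in> carrier_mat n n" unfolding B_def by simp
  have BT: "transpose_mat B \<in> carrier_mat n n" using B by simp
  have "det (transpose_mat B) \<noteq> 0"
  proof
    assume "det (transpose_mat B) = 0"
    then obtain v where v: "v \<in> carrier_vec n" "v \<noteq> 0\<^sub>v n" "transpose_mat B *\<^sub>v v = 0\<^sub>v n"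
      using det_0_iff_vec_prod_zero_field[OF BT] by blast
    have "\<forall>i<n. v $ i = 0"
    proof (rule indpt)
      fix k assume k: "k < n"
      have "(transpose_mat B *\<^sub>v v) $ k = (\<Sum>i<n. C $$ (i, f k) * v $ i)"
        using k v(1) B unfolding B_def
        by (auto simp: scalar_prod_def lessThan_atLeast0 intro!: sum.cong)
      then show "(\<Sum>i<n. C $$ (i, f k) * v $ i) = 0" using v(3) k by simp
    qed
    then have "v = 0\<^sub>v n" using v(1) by (intro eq_vecI) auto
    with v(2) show False by simp
  qed
  then have "rank B = n" using det_transpose[OF B] det_rank_iff[OF B] by simp
  moreover have "distinct (cols B)" using non_distinct_low_rank[OF B] \<open>rank B = n\<close> by auto
  ultimately have "lin_indpt (set (cols B))" using full_rank_lin_indpt[OF B] by simp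
  moreover have "set (cols B) \<subseteq> set (cols C)"
  proof
    fix c assume "c \<in> set (cols B)"
    then obtain k where k: "k < n" "c = col B k" using B by (auto simp: in_set_conv_nth)
    have "col B k = col C (f k)" using k(1) C f[OF k(1)] unfolding B_def by (auto intro!: eq_vecI)
    then show "c \<in> set (cols C)" using k f[OF k(1)] C by (auto simp: in_set_conv_nth)
  qed
  moreover have "card (set (cols B)) = n" using distinct_card[OF \<open>distinct (cols B)\<close>] B by simp
  ultimately show ?thesis using rank_ge_card_indpt[OF C] by metis
qed

lemma triangular_columns_indpt:
  fixes C :: "'a::field mat" and w :: "nat \<Rightarrow> 'b::linorder"
  assumes diag: "\<And>k. k < n \<Longrightarrow> C $$ (k, f k) \<noteq> 0"
    and off_diag: "\<And>i k. i < n \<Longrightarrow> k < n \<Longrightarrow> i \<noteq> k \<Longrightarrow> w i \<le> w k \<Longrightarrow> C $$ (i, f k) = 0"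
    and v: "\<And>k. k < n \<Longrightarrow> (\<Sum>i<n. C $$ (i, f k) * v i) = 0"
  shows "\<forall>i<n. v i = 0"
proof (rule ccontr)
  define S where "S = {i. i < n \<and> v i \<noteq> 0}"
  assume "\<not> (\<forall>i<n. v i = 0)"
  then have "S \<noteq> {}" unfolding S_def by auto
  then obtain k where k: "k \<in> S" and k_max: "\<And>i. i \<in> S \<Longrightarrow> w i \<le> w k"
    using Max_in[of "w ` S"] Max_ge[of "w ` S"] unfolding S_def by fastforce
  have "k < n" "v k \<noteq> 0" using k unfolding S_def by auto
  have "(\<Sum>i<n. C $$ (i, f k) * v i) = (\<Sum>i<n. if i = k then C $$ (i, f k) * v i else 0)"
  proof (rule sum.cong)
    fix i assume "i \<in> {..<n}"
    then show "C $$ (i, f k) * v i = (if i = k then C $$ (i, f k) * v i else 0)"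
      using off_diag[OF _ \<open>k < n\<close>] k_max unfolding S_def by auto
  qed simp
  then have "C $$ (k, f k) * v k = 0" using v[OF \<open>k < n\<close>] \<open>k < n\<close> by simp
  then show False using diag[OF \<open>k < n\<close>] \<open>v k \<noteq> 0\<close> by simp
qed

lemma rank_eq_dim_row_if_triangular_columns:
  fixes C :: "'a::field mat" and w :: "nat \<Rightarrow> 'b::linorder"
  assumes "C \<in> carrier_mat n nc"
    and "\<And>k. k < n \<Longrightarrow> f k < nc"
    and "\<And>k. k < n \<Longrightarrow> C $$ (k, f k) \<noteq> 0"
    and "\<And>i k. i < n \<Longrightarrow> k < n \<Longrightarrow> i \<noteq> k \<Longrightarrow> w i \<le> w k \<Longrightarrow> C $$ (i, f k) = 0"
  shows "vec_space.rank n C = n"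
proof -
  have "n \<le> vec_space.rank n C"
    by (rule rank_ge_dim_row_if_columns_indpt[OF assms(1,2) triangular_columns_indpt[OF assms(3,4)]])
  then show ?thesis using rank_le_dim_row[OF assms(1)] by simp
qed

text \<open>All coefficients of E are natural numbers; counting in \<open>nat\<close> lets characteristic 0
turn "nonzero coefficient" into "nonzero in the field".\<close>

definition E_mon_nat :: "nat \<Rightarrow> nat \<times> nat \<times> nat \<Rightarrow> nat \<times> nat \<times> nat \<Rightarrow> nat" where
  "E_mon_nat d e = (case e of (a1,a2,a3) \<Rightarrow> (\<lambda>m.
      (if 0 < a1 \<and> m = (a1 - 1, a2, a3) then a1 * (d - a1) else 0)
    + (if 0 < a2 \<and> m = (a1, a2 - 1, a3) then a2 * (d - a2) else 0)
    + (if 0 < a3 \<and> m = (a1, a2, a3 - 1) then a3 * (d - a3) else 0)))"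

lemma E_mon_eq_of_nat: "E_mon d e m = of_nat (E_mon_nat d e m)"
  by (cases e) (simp only: E_mon_def E_mon_nat_def prod.case of_nat_add if_distrib[of of_nat] of_nat_0)

definition E_orbit_coeff :: "nat \<Rightarrow> nat \<times> nat \<times> nat \<Rightarrow> nat \<times> nat \<times> nat \<Rightarrow> nat" where
  "E_orbit_coeff d lam m = (\<Sum>e\<in>basis_exps d. if e \<in> orbit3 lam then E_mon_nat d e m else 0)"

lemma E_map_orbit_sum: "(E_map d (orbit_sum lam) m :: 'a::field) = of_nat (E_orbit_coeff d lam m)"
  unfolding E_map_def E_orbit_coeff_def orbit_sum_def E_mon_eq_of_nat of_nat_sum
  by (rule sum.cong) auto

lemma finite_basis_exps: "finite (basis_exps d)"
proof -
  have "basis_exps d \<subseteq> {..<d} \<times> {..<d} \<times> {..<d}" by (auto simp: basis_exps_def)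
  then show ?thesis by (rule finite_subset) auto
qed

definition sorted3 :: "nat \<times> nat \<times> nat \<Rightarrow> bool" where
  "sorted3 x = (case x of (a,b,c) \<Rightarrow> b \<le> a \<and> c \<le> b)"

lemma sorted3_P3: "x \<in> P3 l n \<Longrightarrow> sorted3 x"
  by (auto simp: P3_def sorted3_def)

lemma orbit3_self: "x \<in> orbit3 x"
  by (cases x) (auto simp: orbit3_def)

lemma orbit3_sorted3_eq: "sorted3 x \<Longrightarrow> sorted3 y \<Longrightarrow> x \<in> orbit3 y \<Longrightarrow> x = y"
  by (cases x; cases y) (auto simp: sorted3_def orbit3_def)

lemma E_orbit_coeff_raise_pos:
  assumes "sorted3 (a,b,c)" "a + 1 < d"
  shows "E_orbit_coeff d (a+1,b,c) (a,b,c) \<noteq> 0"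
proof -
  have "(a+1,b,c) \<in> basis_exps d" using assms by (auto simp: basis_exps_def sorted3_def)
  moreover have "E_mon_nat d (a+1,b,c) (a,b,c) \<noteq> 0" using assms by (simp add: E_mon_nat_def)
  ultimately show ?thesis using finite_basis_exps unfolding E_orbit_coeff_def
    by (subst sum_eq_0_iff) (auto intro!: bexI[of _ "(a+1,b,c)"] simp: orbit3_def)
qed

lemma E_orbit_coeff_raise_zero:
  assumes "sorted3 (a,b,c)" "sorted3 m" "fst m \<le> a" "m \<noteq> (a,b,c)"
  shows "E_orbit_coeff d (a+1,b,c) m = 0"
proof -
  have "E_mon_nat d e m = 0" if "e \<in> orbit3 (a+1,b,c)" for e
    using assms that by (cases m) (auto simp: sorted3_def orbit3_def E_mon_nat_def)
  then show ?thesis unfolding E_orbit_coeff_def by (intro sum.neutral) auto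
qed

lemma coeff_orbit_sum_expansion:
  assumes "distinct mus" "\<And>p. p < length mus \<Longrightarrow> sorted3 (mus ! p)" "p < length mus"
  shows "(\<Sum>p'<length mus. c p' * (orbit_sum (mus ! p') (mus ! p) :: 'a::field)) = c p"
proof -
  have "mus ! p \<in> orbit3 (mus ! p') \<longleftrightarrow> p' = p" if "p' < length mus" for p'
    using orbit3_sorted3_eq[OF assms(2,2)] orbit3_self nth_eq_iff_index_eq[OF assms(1)] that assms(3)
    by metis
  then have "(\<Sum>p'<length mus. c p' * orbit_sum (mus ! p') (mus ! p))
      = (\<Sum>p'<length mus. if p' = p then c p' else (0::'a))"
    by (intro sum.cong) (auto simp: orbit_sum_def)
  then show ?thesis using assms(3) by simp
qed

lemma E_matrix_entry:
  assumes "distinct mus" "\<And>p. p < length mus \<Longrightarrow> sorted3 (mus ! p)" "p < length mus"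
    and "E_map d (orbit_sum lam) = (\<lambda>m. \<Sum>p < length mus. c p * orbit_sum (mus ! p) m)"
  shows "c p = (of_nat (E_orbit_coeff d lam (mus ! p)) :: 'a::field)"
  using fun_cong[OF assms(4), of "mus ! p"] coeff_orbit_sum_expansion[OF assms(1-3), of c]
  by (simp add: E_map_orbit_sum)

lemma raise_mem_P3:
  assumes "(a,b,c) \<in> P3 (d - 1) (j - 1)" "0 < j" "j < d"
  shows "(a+1,b,c) \<in> P3 (d - 1) j" and "a + 1 < d"
  using assms by (auto simp: P3_def)

theorem lemma3p2:
  fixes d j :: nat
    and lams mus :: "(nat \<times> nat \<times> nat) list"
    and C :: "'a :: {alg_closed_field, field_char_0} mat"
  assumes "0 < j" and "j < d"
    and "distinct lams" and "set lams = P3 (d - 1) j"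
    and "distinct mus" and "set mus = P3 (d - 1) (j - 1)"
    and "C \<in> carrier_mat (length mus) (length lams)"
    and "\<forall>q < length lams.
           E_map d (orbit_sum (lams ! q))
             = (\<lambda>m. \<Sum>p < length mus. C $$ (p, q) * orbit_sum (mus ! p) m)"
  shows "vec_space.rank (length mus) C = length mus
         \<and> length mus = p3 (d - 1) (j - 1)"
proof -
  let ?raise = "\<lambda>(a::nat, bc::nat \<times> nat). (a + 1, bc)"
  have mus_P3: "mus ! p \<in> P3 (d - 1) (j - 1)" if "p < length mus" for p
    using assms(6) that nth_mem by blast
  have C_entry: "C $$ (p, q) = of_nat (E_orbit_coeff d (lams ! q) (mus ! p))"
    if "p < length mus" "q < length lams" for p q
    using E_matrix_entry[OF assms(5) sorted3_P3[OF mus_P3] that(1) assms(8)[rule_format, OF that(2)]] .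
  have "\<forall>p. \<exists>q. p < length mus \<longrightarrow> q < length lams \<and> lams ! q = ?raise (mus ! p)"
    using raise_mem_P3(1)[OF _ assms(1,2)] mus_P3 assms(4)
    by (metis (no_types, lifting) case_prod_conv in_set_conv_nth prod.collapse)
  then obtain f where f: "\<And>p. p < length mus \<Longrightarrow> f p < length lams \<and> lams ! f p = ?raise (mus ! p)"
    by metis
  have "vec_space.rank (length mus) C = length mus"
  proof (rule rank_eq_dim_row_if_triangular_columns[OF assms(7), where f = f and w = "\<lambda>p. fst (mus ! p)"])
    fix k assume k: "k < length mus"
    obtain a b c where abc: "mus ! k = (a,b,c)" by (metis prod.collapse)
    have sorted: "sorted3 (a,b,c)" and "a + 1 < d"
      using sorted3_P3 raise_mem_P3(2)[OF _ assms(1,2)] mus_P3[OF k] abc by metis+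
    have f_k: "f k < length lams" "lams ! f k = (a+1,b,c)" using f[OF k] abc by auto
    show "f k < length lams" by (fact f_k(1))
    show "C $$ (k, f k) \<noteq> 0"
      using C_entry[OF k f_k(1)] E_orbit_coeff_raise_pos[OF sorted \<open>a + 1 < d\<close>] f_k(2) abc by simp
    fix i assume i: "i < length mus" "i \<noteq> k" "fst (mus ! i) \<le> fst (mus ! k)"
    then have "mus ! i \<noteq> (a,b,c)" using nth_eq_iff_index_eq[OF assms(5)] k abc by metis
    then show "C $$ (i, f k) = 0"
      using C_entry[OF i(1) f_k(1)] E_orbit_coeff_raise_zero[OF sorted sorted3_P3[OF mus_P3[OF i(1)]]]
        i(3) f_k(2) abc by simp
  qed
  moreover have "length mus = p3 (d - 1) (j - 1)"
    unfolding p3_def using assms(6) distinct_card[OF assms(5)] by simp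
  ultimately show ?thesis by simp
qed

end
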